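(* Let $S$ be an MPD-semigroup generated by $\mathcal A=\{\mathbf a_1,\dots,\mathbf a_n\}\subset\mathbb N^d$. Then every Frobenius element of $S$ is a Frobenius vector of $S$.
   Context: $S$ is an MPD-semigroup if, for a field $\Bbbk$, the $\Bbbk[x_1,\dots,x_n]$-module $\Bbbk[S]$ (via $x_i\mapsto\chi^{\mathbf a_i}$) has depth $1$ (projective dimension $n-1$). $\mathrm{pos}(S)=\{\sum_i\lambda_i\mathbf a_i:\lambda_i\in\mathbb Q_{\ge0}\}$, $\mathcal H(S)=(\mathrm{pos}(S)\setminus S)\cap\mathbb N^d$. A term order on $\mathbb N^d$ is a total order compatible with addition with $0$ least. $\mathbf f\in\mathcal H(S)$ is a Frobenius element of $S$ if $\mathbf f=\max_\prec\mathcal H(S)$ for some term order $\prec$. Let $G(\mathcal A)$ be the subgroup of $\mathbb Z^d$ generated by $\mathcal A$ and $\mathrm{relint}(\mathrm{pos}(S))$ the relative interior of $\mathrm{pos}(S)$. A Frobenius vector of $S$ is an $\mathbf f\in G(\mathcal A)\setminus S$ such that $\mathbf f+(\mathrm{relint}(\mathrm{pos}(S))\cap G(\mathcal A))\subseteq S\setminus\{0\}$. *)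

theory Defs
  imports "HOL-Analysis.Analysis" "HOL-Library.Poly_Mapping"
begin

text \<open>Conventions. Vectors of Z^d are elements of type int^'d (dimension d = CARD('d)).
  The generators are a 0, ..., a (n-1) (the paper's a_1, ..., a_n), all in N^d.\<close>

definition Nd :: "(int^'d) set" where
  "Nd = {v. \<forall>j. 0 \<le> v $ j}"

definition semigroup_gen :: "nat \<Rightarrow> (nat \<Rightarrow> int^'d) \<Rightarrow> (int^'d) set" where
  "semigroup_gen n a = {(\<Sum>i<n. int (c i) *s a i) | c. True}"

definition group_gen :: "nat \<Rightarrow> (nat \<Rightarrow> int^'d) \<Rightarrow> (int^'d) set" where
  "group_gen n a = {(\<Sum>i<n. c i *s a i) | c. True}"

text \<open>Embedding Z^d into R^d (Q^d is viewed as the rational points of R^d).\<close>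
definition rvec :: "int^'d \<Rightarrow> real^'d" where
  "rvec v = (\<chi> j. real_of_int (v $ j))"

definition Qd :: "(real^'d) set" where
  "Qd = {x. \<forall>j. x $ j \<in> \<rat>}"

definition pos_cone :: "nat \<Rightarrow> (nat \<Rightarrow> int^'d) \<Rightarrow> (real^'d) set" where
  "pos_cone n a = {(\<Sum>i<n. l i *\<^sub>R rvec (a i)) | l. \<forall>i<n. l i \<in> \<rat> \<and> 0 \<le> l i}"

definition affine_hull_Q :: "(real^'d) set \<Rightarrow> (real^'d) set" where
  "affine_hull_Q C = {(\<Sum>c\<in>F. mu c *\<^sub>R c) | F mu. finite F \<and> F \<subseteq> C \<and>
      (\<forall>c\<in>F. mu c \<in> \<rat>) \<and> sum mu F = 1}"

definition relint_Q :: "(real^'d) set \<Rightarrow> (real^'d) set" where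
  "relint_Q C = {x. \<exists>T. openin (top_of_set (affine_hull_Q C)) T \<and> x \<in> T \<and> T \<subseteq> C}"

definition holes :: "nat \<Rightarrow> (nat \<Rightarrow> int^'d) \<Rightarrow> (int^'d) set" where
  "holes n a = {v \<in> Nd. rvec v \<in> pos_cone n a \<and> v \<notin> semigroup_gen n a}"

definition term_order :: "(int^'d \<Rightarrow> int^'d \<Rightarrow> bool) \<Rightarrow> bool" where
  "term_order le \<longleftrightarrow>
     (\<forall>x\<in>Nd. le x x) \<and>
     (\<forall>x\<in>Nd. \<forall>y\<in>Nd. le x y \<and> le y x \<longrightarrow> x = y) \<and>
     (\<forall>x\<in>Nd. \<forall>y\<in>Nd. \<forall>z\<in>Nd. le x y \<and> le y z \<longrightarrow> le x z) \<and>
     (\<forall>x\<in>Nd. \<forall>y\<in>Nd. le x y \<or> le y x) \<and>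
     (\<forall>x\<in>Nd. \<forall>y\<in>Nd. \<forall>z\<in>Nd. le x y \<longrightarrow> le (x + z) (y + z)) \<and>
     (\<forall>x\<in>Nd. le 0 x)"

definition is_Frobenius_element :: "nat \<Rightarrow> (nat \<Rightarrow> int^'d) \<Rightarrow> int^'d \<Rightarrow> bool" where
  "is_Frobenius_element n a f \<longleftrightarrow>
     f \<in> holes n a \<and> (\<exists>le. term_order le \<and> (\<forall>h\<in>holes n a. le h f))"

definition is_Frobenius_vector :: "nat \<Rightarrow> (nat \<Rightarrow> int^'d) \<Rightarrow> int^'d \<Rightarrow> bool" where
  "is_Frobenius_vector n a f \<longleftrightarrow>
     f \<in> group_gen n a \<and> f \<notin> semigroup_gen n a \<and>
     (\<forall>v\<in>group_gen n a. rvec v \<in> relint_Q (pos_cone n a) \<longrightarrow>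
        f + v \<in> semigroup_gen n a \<and> f + v \<noteq> 0)"

text \<open>Polynomials in variables x_0..x_(n-1) (the paper's x_1..x_n): elements of
  polynomial maps whose monomials only involve variables < n.\<close>
definition polyring :: "nat \<Rightarrow> (((nat \<Rightarrow>\<^sub>0 nat) \<Rightarrow>\<^sub>0 'k::field) set)" where
  "polyring n = {f. \<forall>\<alpha>\<in>Poly_Mapping.keys f. Poly_Mapping.keys \<alpha> \<subseteq> {..<n}}"

definition max_ideal :: "nat \<Rightarrow> (((nat \<Rightarrow>\<^sub>0 nat) \<Rightarrow>\<^sub>0 'k::field) set)" where
  "max_ideal n = {f \<in> polyring n. Poly_Mapping.lookup f 0 = 0}"

definition semigroup_ring :: "'k itself \<Rightarrow> nat \<Rightarrow> (nat \<Rightarrow> int^'d) \<Rightarrow> ((int^'d \<Rightarrow>\<^sub>0 'k::field) set)" where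
  "semigroup_ring _ n a = {g. Poly_Mapping.keys g \<subseteq> semigroup_gen n a}"

definition phi :: "nat \<Rightarrow> (nat \<Rightarrow> int^'d) \<Rightarrow> ((nat \<Rightarrow>\<^sub>0 nat) \<Rightarrow>\<^sub>0 'k::field) \<Rightarrow> (int^'d \<Rightarrow>\<^sub>0 'k)" where
  "phi n a f = (\<Sum>\<alpha>\<in>Poly_Mapping.keys f.
      Poly_Mapping.single (\<Sum>i<n. int (Poly_Mapping.lookup \<alpha> i) *s a i) (Poly_Mapping.lookup f \<alpha>))"

definition act :: "nat \<Rightarrow> (nat \<Rightarrow> int^'d) \<Rightarrow> ((nat \<Rightarrow>\<^sub>0 nat) \<Rightarrow>\<^sub>0 'k::field) \<Rightarrow> (int^'d \<Rightarrow>\<^sub>0 'k) \<Rightarrow> (int^'d \<Rightarrow>\<^sub>0 'k)" where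
  "act n a f u = phi n a f * u"

definition ideal_times_M :: "nat \<Rightarrow> (nat \<Rightarrow> int^'d) \<Rightarrow> ((nat \<Rightarrow>\<^sub>0 nat) \<Rightarrow>\<^sub>0 'k::field) list \<Rightarrow> (int^'d \<Rightarrow>\<^sub>0 'k) set" where
  "ideal_times_M n a fs = {(\<Sum>i<length fs. act n a (fs ! i) (u i)) | u.
      \<forall>i<length fs. u i \<in> semigroup_ring TYPE('k) n a}"

definition regular_seq :: "nat \<Rightarrow> (nat \<Rightarrow> int^'d) \<Rightarrow> ((nat \<Rightarrow>\<^sub>0 nat) \<Rightarrow>\<^sub>0 'k::field) list \<Rightarrow> bool" where
  "regular_seq n a fs \<longleftrightarrow>
     set fs \<subseteq> max_ideal n \<and>
     (\<forall>i<length fs. \<forall>u\<in>semigroup_ring TYPE('k) n a.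
        act n a (fs ! i) u \<in> ideal_times_M n a (take i fs) \<longrightarrow> u \<in> ideal_times_M n a (take i fs)) \<and>
     ideal_times_M n a fs \<noteq> semigroup_ring TYPE('k) n a"

definition depth_semigroup_ring :: "'k::field itself \<Rightarrow> nat \<Rightarrow> (nat \<Rightarrow> int^'d) \<Rightarrow> enat" where
  "depth_semigroup_ring _ n a =
     Sup {enat (length fs) | fs :: ((nat \<Rightarrow>\<^sub>0 nat) \<Rightarrow>\<^sub>0 'k) list. regular_seq n a fs}"

definition MPD_semigroup :: "'k::field itself \<Rightarrow> nat \<Rightarrow> (nat \<Rightarrow> int^'d) \<Rightarrow> bool" where
  "MPD_semigroup k n a \<longleftrightarrow> depth_semigroup_ring k n a = 1"

end

theory Submission
  imports Defs
begin

text \<open>If f is the \<prec>-largest hole and v \<noteq> 0 lies in pos(S) \<inter> N^d, then f \<prec> f + v and f + v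
  lies in pos(S) \<inter> N^d again, so f + v cannot be a hole, i.e. f + v \<in> S. Points of G(A) in the
  relative interior of pos(S) are such v (the cone is nonzero since it contains the hole f),
  and f \<in> G(A) because f + a_i \<in> S for a nonzero generator a_i.\<close>

lemma rvec_add: "rvec (x + y) = rvec x + rvec y"
  by (simp add: rvec_def vec_eq_iff)

lemma rvec_zero [simp]: "rvec 0 = 0"
  by (simp add: rvec_def vec_eq_iff)

lemma rvec_eq_0_iff: "rvec x = 0 \<longleftrightarrow> x = 0"
  by (simp add: rvec_def vec_eq_iff)

lemma zero_in_semigroup_gen: "0 \<in> semigroup_gen n a"
  unfolding semigroup_gen_def by (auto intro!: exI[of _ "\<lambda>_. 0"])

lemma gen_in_semigroup_gen:
  assumes "i < n"
  shows "a i \<in> semigroup_gen n a"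
proof -
  have "(\<Sum>j<n. int (if j = i then 1 else 0) *s a j) = (\<Sum>j<n. if j = i then a j else 0)"
    by (rule sum.cong) auto
  with assms show ?thesis
    unfolding semigroup_gen_def by (auto intro!: exI[of _ "\<lambda>j. if j = i then 1 else 0"])
qed

lemma semigroup_gen_subset_group_gen: "semigroup_gen n a \<subseteq> group_gen n a"
proof
  fix x assume "x \<in> semigroup_gen n a"
  then obtain c where "x = (\<Sum>i<n. int (c i) *s a i)"
    unfolding semigroup_gen_def by blast
  then show "x \<in> group_gen n a"
    unfolding group_gen_def by (intro CollectI exI[of _ "\<lambda>i. int (c i)"]) simp
qed

lemma group_gen_diff:
  assumes "x \<in> group_gen n a" "y \<in> group_gen n a"
  shows "x - y \<in> group_gen n a"
proof -
  obtain c d where "x = (\<Sum>i<n. c i *s a i)" "y = (\<Sum>i<n. d i *s a i)"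
    using assms unfolding group_gen_def by blast
  then have "x - y = (\<Sum>i<n. (c i - d i) *s a i)"
    by (simp only: vector_sub_rdistrib sum_subtractf)
  then show ?thesis
    unfolding group_gen_def by (intro CollectI exI[of _ "\<lambda>i. c i - d i"]) simp
qed

lemma add_gen_in_semigroup_gen_imp_group_gen:
  assumes "x + a i \<in> semigroup_gen n a" "i < n"
  shows "x \<in> group_gen n a"
proof -
  have "(x + a i) - a i \<in> group_gen n a"
    using assms group_gen_diff semigroup_gen_subset_group_gen gen_in_semigroup_gen by blast
  then show ?thesis
    by simp
qed

lemma pos_cone_add:
  assumes "x \<in> pos_cone n a" "y \<in> pos_cone n a"
  shows "x + y \<in> pos_cone n a"
proof -
  obtain l where l: "x = (\<Sum>i<n. l i *\<^sub>R rvec (a i))" "\<forall>i<n. l i \<in> \<rat> \<and> 0 \<le> l i"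
    using assms(1) unfolding pos_cone_def by blast
  obtain m where m: "y = (\<Sum>i<n. m i *\<^sub>R rvec (a i))" "\<forall>i<n. m i \<in> \<rat> \<and> 0 \<le> m i"
    using assms(2) unfolding pos_cone_def by blast
  have "x + y = (\<Sum>i<n. (l i + m i) *\<^sub>R rvec (a i))"
    by (simp add: l m scaleR_add_left sum.distrib)
  with l m show ?thesis
    unfolding pos_cone_def by (auto intro!: exI[of _ "\<lambda>i. l i + m i"])
qed

lemma rvec_semigroup_gen_in_pos_cone:
  assumes "x \<in> semigroup_gen n a"
  shows "rvec x \<in> pos_cone n a"
proof -
  obtain c where "x = (\<Sum>i<n. int (c i) *s a i)"
    using assms unfolding semigroup_gen_def by blast
  then have "rvec x = (\<Sum>i<n. real (c i) *\<^sub>R rvec (a i))"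
    by (simp add: rvec_def vec_eq_iff sum_component)
  then show ?thesis
    unfolding pos_cone_def by (auto intro!: exI[of _ "\<lambda>i. real (c i)"])
qed

lemma pos_cone_nonneg:
  assumes "\<forall>i<n. a i \<in> Nd" "x \<in> pos_cone n a"
  shows "0 \<le> x $ j"
proof -
  obtain l where l: "x = (\<Sum>i<n. l i *\<^sub>R rvec (a i))" "\<forall>i<n. l i \<in> \<rat> \<and> 0 \<le> l i"
    using assms(2) unfolding pos_cone_def by blast
  have "x $ j = (\<Sum>i<n. l i * real_of_int (a i $ j))"
    by (simp add: l rvec_def sum_component)
  also have "\<dots> \<ge> 0"
    using l(2) assms(1) by (intro sum_nonneg) (auto simp: Nd_def)
  finally show ?thesis .
qed

lemma rvec_in_pos_cone_imp_Nd:
  assumes "\<forall>i<n. a i \<in> Nd" "rvec v \<in> pos_cone n a"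
  shows "v \<in> Nd"
  using pos_cone_nonneg[OF assms] by (auto simp: Nd_def rvec_def)

lemma pos_cone_nonzero_imp_nonzero_gen:
  assumes "x \<in> pos_cone n a" "x \<noteq> 0"
  shows "\<exists>i<n. a i \<noteq> 0"
proof (rule ccontr)
  assume "\<not> (\<exists>i<n. a i \<noteq> 0)"
  moreover obtain l where "x = (\<Sum>i<n. l i *\<^sub>R rvec (a i))"
    using assms(1) unfolding pos_cone_def by blast
  ultimately have "x = 0"
    by simp
  with assms(2) show False ..
qed

text \<open>A neighbourhood of 0 in the affine hull contains -\<epsilon> c for every c \<in> C and small
  rational \<epsilon> > 0, which leaves the nonnegative orthant unless c = 0.\<close>

lemma zero_in_relint_Q_imp_zero:
  assumes nonneg: "\<forall>x\<in>C. \<forall>j. 0 \<le> x $ j" and "0 \<in> C" "0 \<in> relint_Q C" "c \<in> C"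
  shows "c = 0"
proof (rule ccontr)
  assume "c \<noteq> 0"
  then obtain j where "c $ j \<noteq> 0" by (auto simp: vec_eq_iff)
  with nonneg \<open>c \<in> C\<close> have cj: "c $ j > 0" by (simp add: less_le)
  obtain T where T: "openin (top_of_set (affine_hull_Q C)) T" "0 \<in> T" "T \<subseteq> C"
    using assms(3) unfolding relint_Q_def by blast
  obtain U where U: "open U" "T = U \<inter> affine_hull_Q C"
    using T(1) by (auto simp: openin_open)
  obtain e where e: "e > 0" "ball 0 e \<subseteq> U"
    using U T(2) open_contains_ball by blast
  obtain N :: nat where N: "real N > norm c / e"
    using reals_Archimedean2 by blast
  then have "real N > 0"
    using e by (smt (verit) divide_nonneg_pos norm_ge_zero)
  define \<epsilon> where "\<epsilon> = 1 / real N"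
  have "\<epsilon> > 0" "\<epsilon> \<in> \<rat>"
    using \<open>real N > 0\<close> by (simp_all add: \<epsilon>_def)
  define p where "p = (- \<epsilon>) *\<^sub>R c"
  have "norm p = norm c / real N"
    by (simp add: p_def \<epsilon>_def)
  also have "\<dots> < e"
    using N e \<open>real N > 0\<close> by (simp add: field_simps)
  finally have "p \<in> U"
    using e by auto
  moreover have "p \<in> affine_hull_Q C"
  proof -
    let ?\<mu> = "\<lambda>x. if x = c then - \<epsilon> else 1 + \<epsilon>"
    have "p = (\<Sum>x\<in>{0, c}. ?\<mu> x *\<^sub>R x)" "sum ?\<mu> {0, c} = 1"
      using \<open>c \<noteq> 0\<close> by (simp_all add: p_def)
    moreover have "\<forall>x\<in>{0, c}. ?\<mu> x \<in> \<rat>"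
      using \<open>\<epsilon> \<in> \<rat>\<close> by auto
    ultimately show ?thesis
      using \<open>0 \<in> C\<close> \<open>c \<in> C\<close> unfolding affine_hull_Q_def
      by (auto intro!: exI[of _ "{0, c}"] exI[of _ ?\<mu>])
  qed
  ultimately have "p \<in> C"
    using U T by blast
  moreover have "p $ j < 0"
    using cj \<open>\<epsilon> > 0\<close> by (simp add: p_def)
  ultimately show False
    using nonneg by (meson not_le)
qed

lemma relint_pos_cone_nonzero:
  assumes "\<forall>i<n. a i \<in> Nd" "x \<in> pos_cone n a" "x \<noteq> 0"
    and "rvec v \<in> relint_Q (pos_cone n a)"
  shows "v \<noteq> 0"
proof
  assume "v = 0"
  with assms(4) have "0 \<in> relint_Q (pos_cone n a)"
    by simp
  moreover have "0 \<in> pos_cone n a"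
    using rvec_semigroup_gen_in_pos_cone[OF zero_in_semigroup_gen] by simp
  ultimately have "x = 0"
    using zero_in_relint_Q_imp_zero assms(2) pos_cone_nonneg[OF assms(1)] by blast
  with assms(3) show False ..
qed

lemma term_order_le_add:
  assumes "term_order le" "x \<in> Nd" "v \<in> Nd"
  shows "le x (x + v)"
proof -
  have "(0::int^'d) \<in> Nd"
    by (simp add: Nd_def)
  with assms have "le (0 + x) (v + x)"
    unfolding term_order_def by blast
  then show ?thesis
    by (simp add: add.commute)
qed

lemma Frobenius_element_add_in_semigroup_gen:
  assumes "is_Frobenius_element n a f" "v \<in> Nd" "v \<noteq> 0" "rvec v \<in> pos_cone n a"
  shows "f + v \<in> semigroup_gen n a"
proof (rule ccontr)
  assume "f + v \<notin> semigroup_gen n a"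
  obtain le where le: "term_order le" "\<forall>h\<in>holes n a. le h f"
    using assms(1) unfolding is_Frobenius_element_def by blast
  have f: "f \<in> Nd" "rvec f \<in> pos_cone n a"
    using assms(1) unfolding is_Frobenius_element_def holes_def by auto
  have fv: "f + v \<in> Nd"
    using f(1) assms(2) by (auto simp: Nd_def)
  with f(2) assms(4) \<open>f + v \<notin> semigroup_gen n a\<close> have "f + v \<in> holes n a"
    by (simp add: holes_def rvec_add pos_cone_add)
  then have "le (f + v) f"
    using le(2) by blast
  moreover have "le f (f + v)"
    using term_order_le_add[OF le(1) f(1) assms(2)] .
  ultimately have "f + v = f"
    using le(1) f(1) fv unfolding term_order_def by blast
  with assms(3) show False
    by simp
qed

theorem proposition3p3:
  fixes a :: "nat \<Rightarrow> int^'d" and n :: nat and f :: "int^'d"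
  assumes "\<forall>i<n. a i \<in> Nd"
    and "inj_on a {..<n}"
    and "MPD_semigroup TYPE('k::field) n a"
    and "is_Frobenius_element n a f"
  shows "is_Frobenius_vector n a f"
proof -
  have f: "f \<in> Nd" "rvec f \<in> pos_cone n a" "f \<notin> semigroup_gen n a"
    using assms(4) unfolding is_Frobenius_element_def holes_def by auto
  then have "f \<noteq> 0"
    using zero_in_semigroup_gen by blast
  note add_in_S = Frobenius_element_add_in_semigroup_gen[OF assms(4)]
  obtain i where i: "i < n" "a i \<noteq> 0"
    using pos_cone_nonzero_imp_nonzero_gen f(2) \<open>f \<noteq> 0\<close> rvec_eq_0_iff by blast
  then have "f + a i \<in> semigroup_gen n a"
    using add_in_S assms(1) gen_in_semigroup_gen rvec_semigroup_gen_in_pos_cone by blast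
  moreover have "f + v \<in> semigroup_gen n a \<and> f + v \<noteq> 0"
    if "rvec v \<in> relint_Q (pos_cone n a)" for v
  proof -
    have "rvec v \<in> pos_cone n a" "v \<noteq> 0"
      using that relint_pos_cone_nonzero[OF assms(1) f(2)] \<open>f \<noteq> 0\<close> rvec_eq_0_iff
      unfolding relint_Q_def by blast+
    then show ?thesis
      using add_in_S rvec_in_pos_cone_imp_Nd[OF assms(1)] f(1) \<open>f \<noteq> 0\<close>
      by (auto simp: Nd_def vec_eq_iff add_nonneg_eq_0_iff)
  qed
  ultimately show ?thesis
    using f(3) i(1) add_gen_in_semigroup_gen_imp_group_gen
    unfolding is_Frobenius_vector_def by blast
qed

end
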